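(* Let $F$ be a polynomial with coefficients in $\{-1,0,1\}$ such that $F(x)=(x-1)^k f(x)$, where $k\ge9$ is an integer and $f$ is a polynomial with integer coefficients and $f(1)\neq0$. Then for every positive integer $d\ge(\deg F+2)^{3/2}$ there exists a polynomial $P$ of degree $d(\deg F+2)-1$ with coefficients in $\{-2,-1,0,1,2\}$ and a real root $\alpha<1$ of $P$ such that $|1-\alpha|\le 2d^{-(k+2)}$. *)

theory Defs
  imports "HOL-Analysis.Analysis" "HOL-Computational_Algebra.Polynomial"
begin

end

theory Submission
  imports Defs
begin

(* The polynomial P(x) = x F(x^d) (x^(d-1) - 1)^2 + x^2 (x - 1) F(x) does the job.
   Expanded, it is x^(2d-1) F(x^d) - 2 x^d F(x^d) + x F(x^d) + x^2 (x - 1) F(x); for d >= deg F + 6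
   the four summands occupy disjoint sets of exponents (residues d-1, 0, 1 mod d, and 2 .. deg F + 3),
   which gives the coefficient bound 2 and the degree d (deg F + 2) - 1.
   Substituting x = 1 + u, x F(x^d) (x^(d-1) - 1)^2 becomes divisible by u^(k+2) and
   x^2 (x - 1) F(x) by u^(k+1), so P(1 + u) = u^(k+1) W(u) with W(0) = f(1) and
   W'(0) = f(1) (d^k (d-1)^2 + 2) + f'(1). At u = -2/d^(k+2) the linear part of W has the sign
   opposite to f(1), while the Taylor coefficients of P at 1 bound the coefficient of u^i in W by
   2 (d (deg F + 2))^(k+2+i) / (k+1+i)!, so the terms with i >= 2 are negligible as soon as
   (deg F + 2)^(k+4) <= d^k; this is where d >= (deg F + 2)^(3/2) and k >= 9 enter. Hence W has a
   root in (-2/d^(k+2), 0) and P one in (1 - 2/d^(k+2), 1). *)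

lemma coeff_pcompose_monom:
  fixes p :: "'a::comm_semiring_1 poly"
  assumes "d > 0"
  shows "coeff (pcompose p (monom 1 d)) i = (if d dvd i then coeff p (i div d) else 0)"
  using assms
proof (induction p arbitrary: i)
  case 0
  then show ?case by simp
next
  case (pCons a p)
  have "coeff (pcompose (pCons a p) (monom 1 d)) i =
      (if i = 0 then a else 0) + (if i < d then 0 else coeff (pcompose p (monom 1 d)) (i - d))"
    by (simp add: pcompose_pCons coeff_monom_mult coeff_pCons split: nat.splits)
  with pCons show ?case
    by (cases "i < d")
      (auto simp: dvd_imp_le le_div_geq dvd_minus_self coeff_pCons div_eq_0_iff split: nat.splits)
qed

lemma coeff_monom_mult_pcompose_monom:
  fixes p :: "'a::comm_semiring_1 poly"
  assumes "d > 0"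
  shows "coeff (monom 1 c * pcompose p (monom 1 d)) i =
    (if c \<le> i \<and> d dvd (i - c) then coeff p ((i - c) div d) else 0)"
  using assms by (simp add: coeff_monom_mult coeff_pcompose_monom)

lemma coeff_monom_mult_pcompose_monom_nonzero_mod:
  fixes p :: "'a::comm_semiring_1 poly"
  assumes "d > 0" and "coeff (monom 1 c * pcompose p (monom 1 d)) i \<noteq> 0"
  shows "i mod d = c mod d"
proof -
  have "c \<le> i" and "d dvd (i - c)"
    using assms by (auto simp: coeff_monom_mult_pcompose_monom split: if_splits)
  then obtain m where "i = c + d * m" by (metis dvdE le_add_diff_inverse)
  then show ?thesis by simp
qed

lemma coeff_monom_mult_nonzero_bounds:
  fixes p :: "'a::comm_semiring_1 poly"
  assumes "coeff (monom 1 c * p) i \<noteq> 0"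
  shows "c \<le> i" and "i \<le> c + degree p"
  using assms le_degree[of p "i - c"] by (auto simp: coeff_monom_mult split: if_splits)

lemma coeff_one_plus_X_power:
  "coeff ([:1, 1:] ^ n :: 'a::comm_semiring_1 poly) i = of_nat (n choose i)"
  by (cases "i \<le> n") (simp_all add: coeff_linear_poly_power binomial_eq_0 coeff_eq_0 degree_linear_power)

lemma pcompose_eq_sum:
  fixes p q :: "'a::comm_semiring_1 poly"
  shows "pcompose p q = (\<Sum>i\<le>degree p. smult (coeff p i) (q ^ i))"
proof (cases "p = 0")
  case False
  then have "degree (map_poly (\<lambda>x. [:x:]) p) = degree p"
    by (intro map_poly_degree_eq) simp
  then show ?thesis
    unfolding pcompose_altdef poly_altdef by (intro sum.cong) (simp_all add: coeff_map_poly)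
qed simp

lemma pcompose_power: "pcompose (p ^ n) q = pcompose p q ^ n"
  for p q :: "'a::comm_semiring_1 poly"
  by (induction n) (simp_all add: pcompose_1 pcompose_mult)

lemma pcompose_X_minus_one: "pcompose [:-1, 1:] q = q - 1"
  for q :: "'a::comm_ring_1 poly"
  by (simp add: pcompose_pCons one_pCons)

lemma pcompose_monom_one_plus_X:
  "pcompose (monom 1 n) [:1, 1:] = ([:1, 1:] ^ n :: 'a::comm_semiring_1 poly)"
  by (simp add: monom_altdef pcompose_power pcompose_pCons)

lemma one_plus_X_power_minus_one:
  "[:1, 1:] ^ n - 1 = [:0, 1:] * (\<Sum>i<n. [:1, 1:] ^ i :: 'a::comm_ring_1 poly)"
proof -
  have "[:1, 1:] - 1 = ([:0, 1:] :: 'a poly)"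
    by (simp add: one_pCons)
  then show ?thesis
    by (simp only: power_diff_1_eq)
qed

lemma coeff_0_sum_one_plus_X_power:
  "coeff (\<Sum>i<n. [:1, 1:] ^ i :: 'a::comm_semiring_1 poly) 0 = of_nat n"
  by (simp add: coeff_sum coeff_one_plus_X_power)

lemma coeff_pcompose_one_plus_X:
  fixes p :: "'a::comm_semiring_1 poly"
  shows "coeff (pcompose p [:1, 1:]) r = (\<Sum>i\<le>degree p. coeff p i * of_nat (i choose r))"
  by (simp add: pcompose_eq_sum coeff_sum coeff_one_plus_X_power)

lemma abs_coeff_pcompose_one_plus_X_le:
  fixes p :: "int poly"
  assumes "\<And>i. \<bar>coeff p i\<bar> \<le> B"
  shows "real_of_int \<bar>coeff (pcompose p [:1, 1:]) r\<bar> * fact r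
    \<le> real_of_int B * real (degree p + 1) ^ (r + 1)"
proof -
  define D where "D = degree p"
  have B: "0 \<le> real_of_int B" using assms[of 0] by simp
  have "\<bar>coeff (pcompose p [:1, 1:]) r\<bar> \<le> (\<Sum>i\<le>D. B * int (i choose r))"
    unfolding coeff_pcompose_one_plus_X D_def
    by (rule order.trans[OF sum_abs sum_mono]) (simp add: abs_mult assms mult_right_mono)
  then have "real_of_int \<bar>coeff (pcompose p [:1, 1:]) r\<bar> \<le> (\<Sum>i\<le>D. of_int B * real (i choose r))"
    using of_int_le_iff[where 'a=real, THEN iffD2] by fastforce
  then have "real_of_int \<bar>coeff (pcompose p [:1, 1:]) r\<bar> * fact r
      \<le> (\<Sum>i\<le>D. of_int B * real (i choose r)) * fact r"
    by (rule mult_right_mono) simp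
  also have "\<dots> = (\<Sum>i\<le>D. of_int B * (real (i choose r) * fact r))"
    by (simp add: sum_distrib_right mult.assoc)
  also have "\<dots> \<le> (\<Sum>i\<le>D. of_int B * real D ^ r)"
  proof (intro sum_mono mult_left_mono B)
    fix i assume "i \<in> {..D}"
    then have "(i choose r) * fact r \<le> D ^ r"
      using binomial_fact_pow[of i r] power_mono[of i D r] by simp
    then show "real (i choose r) * fact r \<le> real D ^ r"
      by (metis of_nat_fact of_nat_le_iff of_nat_mult of_nat_power)
  qed
  also have "\<dots> = of_int B * (real (D + 1) * real D ^ r)"
    by simp
  also have "\<dots> \<le> of_int B * real (D + 1) ^ (r + 1)"
    by (intro mult_left_mono B) (simp add: power_mono)
  finally show ?thesis unfolding D_def .
qed

lemma map_poly_of_int_add: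
  "map_poly (of_int :: int \<Rightarrow> 'a::comm_ring_1) (p + q) = map_poly of_int p + map_poly of_int q"
  by (rule poly_eqI) (simp add: coeff_map_poly)

lemma map_poly_of_int_mult:
  "map_poly (of_int :: int \<Rightarrow> 'a::comm_ring_1) (p * q) = map_poly of_int p * map_poly of_int q"
  by (rule poly_eqI) (simp add: coeff_map_poly coeff_mult)

lemma map_poly_of_int_pcompose:
  "map_poly (of_int :: int \<Rightarrow> 'a::comm_ring_1) (pcompose p q) =
    pcompose (map_poly of_int p) (map_poly of_int q)"
  by (induction p) (simp_all add: pcompose_pCons map_poly_pCons map_poly_of_int_add map_poly_of_int_mult)

lemma poly_map_poly_of_int_shift:
  "poly (map_poly (of_int :: int \<Rightarrow> 'a::comm_ring_1) p) (1 + x) =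
    poly (map_poly of_int (pcompose p [:1, 1:])) x"
  by (simp add: map_poly_of_int_pcompose poly_pcompose map_poly_pCons)


lemma poly_minus_linear_part_le:
  fixes p :: "real poly"
  assumes terms: "\<And>j. \<bar>coeff p (j + 2)\<bar> * \<bar>x\<bar> ^ (j + 2) \<le> a / 2 ^ j"
  shows "\<bar>poly p x - coeff p 0 - coeff p 1 * x\<bar> \<le> 2 * a"
proof -
  define M where "M = degree p"
  have "0 \<le> \<bar>coeff p (0 + 2)\<bar> * \<bar>x\<bar> ^ (0 + 2)"
    by (intro mult_nonneg_nonneg) auto
  then have a: "0 \<le> a"
    using order.trans[OF _ terms[of 0]] by simp
  have "poly p x = (\<Sum>i<M + 2. coeff p i * x ^ i)"
    unfolding poly_altdef M_def lessThan_Suc_atMost[symmetric]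
    by (intro sum.mono_neutral_left) (auto simp: coeff_eq_0)
  also have "\<dots> = coeff p 0 + coeff p 1 * x + (\<Sum>j<M. coeff p (j + 2) * x ^ (j + 2))"
    unfolding add_2_eq_Suc' sum.lessThan_Suc_shift by simp
  finally have "\<bar>poly p x - coeff p 0 - coeff p 1 * x\<bar> = \<bar>\<Sum>j<M. coeff p (j + 2) * x ^ (j + 2)\<bar>"
    by simp
  also have "\<dots> \<le> (\<Sum>j<M. a * (1 / 2) ^ j)"
  proof (rule order.trans[OF sum_abs sum_mono])
    fix j
    show "\<bar>coeff p (j + 2) * x ^ (j + 2)\<bar> \<le> a * (1 / 2) ^ j"
      using terms[of j] by (simp add: abs_mult power_abs power_one_over)
  qed
  also have "\<dots> = a * (\<Sum>j<M. (1 / 2) ^ j)"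
    by (rule sum_distrib_left[symmetric])
  also have "\<dots> \<le> a * (\<Sum>j. (1 / 2) ^ j)"
    using a by (intro mult_left_mono sum_le_suminf summable_geometric) auto
  also have "\<dots> = 2 * a"
    by (subst suminf_geometric) auto
  finally show ?thesis .
qed

lemma poly_root_by_dominant_linear_term:
  fixes p :: "real poly" and t A b :: real
  assumes t: "t > 0" and lin: "coeff p 1 = coeff p 0 * A + b"
    and dominant: "\<bar>b\<bar> * t + \<bar>poly p (-t) - coeff p 0 + coeff p 1 * t\<bar> < \<bar>coeff p 0\<bar> * (A * t - 1)"
  shows "\<exists>s>0. s < t \<and> poly p (-s) = 0"
proof -
  define v where "v = coeff p 0"
  define R where "R = poly p (-t) - v + coeff p 1 * t"
  have small: "\<bar>b\<bar> * t + \<bar>R\<bar> < \<bar>v\<bar> * (A * t - 1)"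
    using dominant unfolding R_def v_def .
  have "v \<noteq> 0"
  proof
    assume "v = 0"
    then have "\<bar>b\<bar> * t + \<bar>R\<bar> < 0" using small by simp
    moreover have "0 \<le> \<bar>b\<bar> * t" using t by simp
    ultimately show False by simp
  qed
  have "v * poly p (-t) = - (\<bar>v\<bar> * \<bar>v\<bar>) * (A * t - 1) - v * (b * t) + v * R"
    unfolding R_def lin v_def abs_mult_self_eq by (simp add: algebra_simps)
  moreover have "- (v * (b * t)) \<le> \<bar>v\<bar> * (\<bar>b\<bar> * t)"
    using t abs_ge_minus_self[of "v * (b * t)"] by (simp add: abs_mult)
  moreover have "v * R \<le> \<bar>v\<bar> * \<bar>R\<bar>"
    by (metis abs_ge_self abs_mult)
  moreover have "\<bar>v\<bar> * (\<bar>b\<bar> * t + \<bar>R\<bar>) < \<bar>v\<bar> * (\<bar>v\<bar> * (A * t - 1))"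
    using small \<open>v \<noteq> 0\<close> by (intro mult_strict_left_mono) auto
  ultimately have "v * poly p (-t) < 0"
    by (simp only: distrib_left mult.assoc mult_minus_left)
  then have "poly p (-t) * poly p 0 < 0"
    by (simp add: v_def poly_0_coeff_0 mult.commute)
  then obtain y where "-t < y" "y < 0" "poly p y = 0"
    using poly_IVT[of "-t" 0 p] t by auto
  then show ?thesis
    by (intro exI[of _ "-y"]) auto
qed

lemma scaled_coeff_le_geometric:
  fixes c N t :: real and k j :: nat
  assumes coeff: "\<bar>c\<bar> * fact (k + 3 + j) \<le> 2 * N ^ (k + 4 + j)"
    and k: "9 \<le> k" and "0 \<le> N" "0 \<le> t"
    and step: "N * t \<le> 1 / 2" and start: "N ^ (k + 4) * t\<^sup>2 \<le> 4"
  shows "\<bar>c\<bar> * t ^ (j + 2) \<le> 8 / fact 12 / 2 ^ j"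
proof -
  have "(fact 12 :: real) \<le> fact (k + 3 + j)"
    using k by (intro fact_mono) simp
  then have "\<bar>c\<bar> * fact 12 \<le> 2 * N ^ (k + 4 + j)"
    using coeff by (smt (verit) abs_ge_zero mult_left_mono)
  then have "\<bar>c\<bar> * fact 12 * t ^ (j + 2) \<le> 2 * N ^ (k + 4 + j) * t ^ (j + 2)"
    using \<open>0 \<le> t\<close> by (intro mult_right_mono) auto
  also have "\<dots> = 2 * (N ^ (k + 4) * t\<^sup>2) * (N * t) ^ j"
    by (simp add: power_add power_mult_distrib power2_eq_square mult_ac)
  also have "\<dots> \<le> 2 * 4 * (1 / 2) ^ j"
    using assms by (intro mult_mono power_mono) auto
  finally show ?thesis
    by (simp add: field_simps power_divide)
qed

lemma int_poly_root_near_zero: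
  fixes W :: "int poly" and N t A b :: real and k :: nat
  assumes k: "9 \<le> k" and N: "0 \<le> N" and t: "0 < t"
    and step: "N * t \<le> 1 / 2" and start: "N ^ (k + 4) * t\<^sup>2 \<le> 4"
    and coeffs: "\<And>i. real_of_int \<bar>coeff W i\<bar> * fact (k + 1 + i) \<le> 2 * N ^ (k + 2 + i)"
    and W0: "coeff W 0 \<noteq> 0"
    and lin: "real_of_int (coeff W 1) = real_of_int (coeff W 0) * A + b"
    and A: "9 / 5 \<le> A * t" and b: "\<bar>b\<bar> * t \<le> 1 / 50"
  shows "\<exists>s>0. s < t \<and> poly (map_poly of_int W) (-s) = 0"
proof -
  define p :: "real poly" where "p = map_poly of_int W"
  have coeff_p: "coeff p i = of_int (coeff W i)" for i
    by (simp add: p_def coeff_map_poly)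
  have "\<bar>coeff p (j + 2)\<bar> * \<bar>-t\<bar> ^ (j + 2) \<le> 8 / fact 12 / 2 ^ j" for j
  proof -
    have shift: "k + 1 + (j + 2) = k + 3 + j" "k + 2 + (j + 2) = k + 4 + j"
      by simp_all
    have "\<bar>coeff p (j + 2)\<bar> * fact (k + 3 + j) \<le> 2 * N ^ (k + 4 + j)"
      using coeffs[of "j + 2"] unfolding shift coeff_p of_int_abs .
    from scaled_coeff_le_geometric[OF this k N less_imp_le[OF t] step start]
    show ?thesis using t by simp
  qed
  then have "\<bar>poly p (-t) - coeff p 0 - coeff p 1 * (-t)\<bar> \<le> 2 * (8 / fact 12)"
    by (rule poly_minus_linear_part_le)
  then have "\<bar>poly p (-t) - coeff p 0 + coeff p 1 * t\<bar> \<le> 2 * (8 / fact 12)"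
    by simp
  moreover have "2 * (8 / fact 12) < (1 / 100 :: real)"
    by (simp add: fact_numeral)
  ultimately have "\<bar>b\<bar> * t + \<bar>poly p (-t) - coeff p 0 + coeff p 1 * t\<bar> < 1 / 50 + 1 / 100"
    using b by linarith
  also have "\<dots> \<le> 1 * (A * t - 1)"
    using A by simp
  also have "\<dots> \<le> \<bar>coeff p 0\<bar> * (A * t - 1)"
    using W0 A by (intro mult_right_mono) (auto simp: coeff_p)
  finally have "\<bar>b\<bar> * t + \<bar>poly p (-t) - coeff p 0 + coeff p 1 * t\<bar> < \<bar>coeff p 0\<bar> * (A * t - 1)" .
  moreover have "coeff p 1 = coeff p 0 * A + b"
    using lin by (simp add: coeff_p)
  ultimately show ?thesis
    using poly_root_by_dominant_linear_term[OF t] unfolding p_def by blast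
qed

lemma nat_bounds_of_cube_le_square:
  fixes d n k :: nat
  assumes k: "9 \<le> k" and n: "9 \<le> n" and dn: "(n + 2) ^ 3 \<le> d\<^sup>2"
  shows "3 * (n + 2) \<le> d" and "(n + 2) ^ (k + 4) \<le> d ^ k" and "4 * (n + 2) \<le> d ^ (k + 1)"
    and "100 * (n + 1) ^ (k + 2) \<le> d ^ (k + 2)"
proof -
  have "(3 * (n + 2))\<^sup>2 = 9 * (n + 2)\<^sup>2"
    unfolding power_mult_distrib by simp
  also have "\<dots> \<le> (n + 2) * (n + 2)\<^sup>2"
    using n by (intro mult_right_mono) auto
  also have "\<dots> = (n + 2) ^ 3"
    by (metis power2_eq_square power3_eq_cube mult.assoc)
  also have "\<dots> \<le> d\<^sup>2"
    by (rule dn)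
  finally show d3: "3 * (n + 2) \<le> d"
    by (rule power2_le_imp_le) simp
  have "((n + 2) ^ (k + 4))\<^sup>2 \<le> ((n + 2) ^ 3) ^ k"
    unfolding power_mult[symmetric] using k by (intro power_increasing) auto
  also have "\<dots> \<le> (d ^ k)\<^sup>2"
    using dn by (metis power_mono power_mult mult.commute zero_le)
  finally show "(n + 2) ^ (k + 4) \<le> d ^ k"
    by (rule power2_le_imp_le) simp
  have "4 * (n + 2) \<le> (n + 2) ^ 3"
    using n by (simp add: power3_eq_cube)
  also have "\<dots> \<le> d\<^sup>2"
    by (rule dn)
  also have "\<dots> \<le> d ^ (k + 1)"
    using d3 k by (intro power_increasing) auto
  finally show "4 * (n + 2) \<le> d ^ (k + 1)" .
  have "(100::nat) \<le> 3 ^ (k + 2)"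
    using power_increasing[of 5 "k + 2" "3::nat"] k by simp
  then have "100 * (n + 1) ^ (k + 2) \<le> 3 ^ (k + 2) * (n + 1) ^ (k + 2)"
    by (rule mult_right_mono) simp
  also have "\<dots> = (3 * (n + 1)) ^ (k + 2)"
    by (simp only: power_mult_distrib)
  also have "\<dots> \<le> d ^ (k + 2)"
    using d3 by (intro power_mono) auto
  finally show "100 * (n + 1) ^ (k + 2) \<le> d ^ (k + 2)" .
qed

lemma real_bounds_of_cube_le_square:
  fixes d n k :: nat
  assumes k: "9 \<le> k" and n: "9 \<le> n" and dn: "(n + 2) ^ 3 \<le> d\<^sup>2"
  defines "t \<equiv> 2 / real d ^ (k + 2)"
  shows "real (d * (n + 2)) * t \<le> 1 / 2"
    and "real (d * (n + 2)) ^ (k + 4) * t\<^sup>2 \<le> 4"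
    and "real (n + 1) ^ (k + 2) * t \<le> 1 / 50"
proof -
  note nat_bounds = nat_bounds_of_cube_le_square[OF k n dn]
  have d20: "20 \<le> real d"
    using nat_bounds(1) n by simp
  then have dpos: "0 < real d ^ (k + 2)"
    by simp
  have "real (d * (n + 2)) * t = 2 * real (n + 2) / real d ^ (k + 1)"
    unfolding t_def using d20 by (simp add: field_simps)
  also have "\<dots> \<le> 1 / 2"
  proof -
    have "4 * real (n + 2) \<le> real d ^ (k + 1)"
      using nat_bounds(3) by (metis of_nat_le_iff of_nat_mult of_nat_numeral of_nat_power)
    then show ?thesis
      using d20 by (simp add: pos_divide_le_eq)
  qed
  finally show "real (d * (n + 2)) * t \<le> 1 / 2" .
  have "real (d * (n + 2)) ^ (k + 4) = real d ^ (k + 4) * real (n + 2) ^ (k + 4)"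
    by (simp only: of_nat_mult power_mult_distrib)
  moreover have "(real d ^ (k + 2))\<^sup>2 = real d ^ (k + 4) * real d ^ k"
  proof -
    have "(real d ^ (k + 2))\<^sup>2 = real d ^ ((k + 2) * 2)"
      by (rule power_mult[symmetric])
    also have "(k + 2) * 2 = (k + 4) + k"
      by simp
    also have "real d ^ ((k + 4) + k) = real d ^ (k + 4) * real d ^ k"
      by (rule power_add)
    finally show ?thesis .
  qed
  ultimately have "real (d * (n + 2)) ^ (k + 4) * t\<^sup>2 = 4 * (real (n + 2) ^ (k + 4) / real d ^ k)"
    unfolding t_def power_divide using d20 by simp
  also have "\<dots> \<le> 4"
  proof -
    have "real (n + 2) ^ (k + 4) \<le> real d ^ k"
      using nat_bounds(2) by (metis of_nat_le_iff of_nat_power)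
    then show ?thesis
      using d20 by (simp add: pos_divide_le_eq)
  qed
  finally show "real (d * (n + 2)) ^ (k + 4) * t\<^sup>2 \<le> 4" .
  have "real (100 * (n + 1) ^ (k + 2)) \<le> real (d ^ (k + 2))"
    using nat_bounds(4) by (simp only: of_nat_le_iff)
  then have "real (n + 1) ^ (k + 2) \<le> 1 / 100 * real d ^ (k + 2)"
    by (simp only: of_nat_mult of_nat_power of_nat_numeral)
  then have "real (n + 1) ^ (k + 2) / real d ^ (k + 2) \<le> 1 / 100"
    by (subst pos_divide_le_eq[OF dpos])
  moreover have "real (n + 1) ^ (k + 2) * t = 2 * (real (n + 1) ^ (k + 2) / real d ^ (k + 2))"
    unfolding t_def by simp
  ultimately show "real (n + 1) ^ (k + 2) * t \<le> 1 / 50"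
    by linarith
qed

lemma scaled_linear_coeff_ge:
  fixes x :: real
  assumes x: "20 \<le> x"
  shows "9 / 5 \<le> (x ^ k * (x - 1)\<^sup>2 + 2) * (2 / x ^ (k + 2))"
proof -
  have pos: "0 < x ^ (k + 2)"
    using x by simp
  have "0 \<le> x * (x - 20)"
    using x by simp
  then have "9 / 5 * x\<^sup>2 \<le> 2 * (x - 1)\<^sup>2"
    by (simp add: power2_eq_square algebra_simps)
  then have "9 / 5 * x ^ (k + 2) \<le> x ^ k * (2 * (x - 1)\<^sup>2)"
    unfolding power_add mult.left_commute[of "9 / 5"] using x by (intro mult_left_mono) simp_all
  then have "9 / 5 * x ^ (k + 2) \<le> 2 * x ^ k * (x - 1)\<^sup>2"
    by (simp add: mult_ac)
  then have "9 / 5 \<le> 2 * x ^ k * (x - 1)\<^sup>2 / x ^ (k + 2)"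
    using pos_le_divide_eq[OF pos] by blast
  then have "9 / 5 \<le> x ^ k * (x - 1)\<^sup>2 * (2 / x ^ (k + 2))"
    by (simp add: mult_ac)
  moreover have "0 \<le> 2 * (2 / x ^ (k + 2))"
    using pos by simp
  ultimately show ?thesis
    unfolding distrib_right by linarith
qed

lemma cube_le_square_if_powr_le:
  fixes m d :: nat
  assumes "real m powr (3 / 2) \<le> real d"
  shows "m ^ 3 \<le> d\<^sup>2"
proof -
  have "real m ^ 3 = real m powr (3 / 2) * real m powr (3 / 2)"
  proof (cases "m = 0")
    case False
    then have "real m ^ 3 = real m powr (real 3)"
      by (simp add: powr_realpow)
    also have "\<dots> = real m powr (3 / 2) * real m powr (3 / 2)"
      by (simp add: powr_add[symmetric])
    finally show ?thesis .
  qed simp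
  also have "\<dots> \<le> real d * real d"
    using assms by (intro mult_mono) auto
  finally have "real (m ^ 3) \<le> real (d\<^sup>2)"
    by (simp add: power2_eq_square)
  then show ?thesis
    by (simp only: of_nat_le_iff)
qed

definition root_approx_poly :: "'a::comm_ring_1 poly \<Rightarrow> nat \<Rightarrow> 'a poly" where
  "root_approx_poly F d =
     monom 1 1 * pcompose F (monom 1 d) * (monom 1 (d - 1) - 1)\<^sup>2 + monom 1 2 * [:-1, 1:] * F"

lemma root_approx_poly_expand:
  assumes "d > 0"
  shows "root_approx_poly F d =
    monom 1 (2 * d - 1) * pcompose F (monom 1 d) - 2 * (monom 1 d * pcompose F (monom 1 d))
      + monom 1 1 * pcompose F (monom 1 d) + monom 1 2 * [:-1, 1:] * F"
proof -
  obtain e where d: "d = Suc e" using assms by (cases d) auto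
  have "monom 1 (2 * d - 1) = monom 1 1 * monom (1::'a) (d - 1) * monom 1 (d - 1)"
    and "monom 1 d = monom 1 1 * monom (1::'a) (d - 1)"
    unfolding d by (simp_all add: mult_monom mult_2)
  then show ?thesis
    unfolding root_approx_poly_def by (simp add: power2_eq_square algebra_simps)
qed

lemma coeff_root_approx_poly:
  fixes F :: "'a::comm_ring_1 poly"
  assumes d: "degree F + 6 \<le> d"
  shows "coeff (root_approx_poly F d) i =
    (if i mod d = d - 1 then coeff (monom 1 (2 * d - 1) * pcompose F (monom 1 d)) i
     else if i mod d = 0 then - 2 * coeff (monom 1 d * pcompose F (monom 1 d)) i
     else if i mod d = 1 then coeff (monom 1 1 * pcompose F (monom 1 d)) i
     else coeff (monom 1 2 * [:-1, 1:] * F) i)"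
proof -
  have d0: "d > 0" using d by simp
  define a1 where "a1 = coeff (monom 1 (2 * d - 1) * pcompose F (monom 1 d)) i"
  define a2 where "a2 = coeff (monom 1 d * pcompose F (monom 1 d)) i"
  define a3 where "a3 = coeff (monom 1 1 * pcompose F (monom 1 d)) i"
  define a4 where "a4 = coeff (monom 1 2 * [:-1, 1:] * F) i"
  have sum: "coeff (root_approx_poly F d) i = a1 - 2 * a2 + a3 + a4"
    unfolding root_approx_poly_expand[OF d0] a1_def a2_def a3_def a4_def
    by (simp add: numeral_poly)
  have "2 * d - 1 = (d - 1) + 1 * d"
    using d0 by simp
  then have "(2 * d - 1) mod d = d - 1"
    using d0 by (simp only: mod_mult_self1) simp
  then have a1: "i mod d = d - 1" if "a1 \<noteq> 0"
    using coeff_monom_mult_pcompose_monom_nonzero_mod[OF d0] that unfolding a1_def by metis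
  have a2: "i mod d = 0" if "a2 \<noteq> 0"
    using coeff_monom_mult_pcompose_monom_nonzero_mod[OF d0 that[unfolded a2_def]] by simp
  have a3: "i mod d = 1" if "a3 \<noteq> 0"
    using coeff_monom_mult_pcompose_monom_nonzero_mod[OF d0 that[unfolded a3_def]] d by simp
  have a4: "i mod d \<notin> {0, 1, d - 1}" if "a4 \<noteq> 0"
  proof -
    have "2 \<le> i" and "i \<le> 2 + degree ([:-1, 1:] * F)"
      using coeff_monom_mult_nonzero_bounds that unfolding a4_def mult.assoc by blast+
    moreover have "degree ([:-1, 1:] * F) \<le> degree F + 1"
      using degree_mult_le[of "[:-1, 1:]" F] by simp
    ultimately show ?thesis
      using d by simp
  qed
  have "d - 1 \<noteq> 0" "d - 1 \<noteq> 1"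
    using d by simp_all
  then consider "i mod d = d - 1" "a2 = 0" "a3 = 0" "a4 = 0"
    | "i mod d = 0" "a1 = 0" "a3 = 0" "a4 = 0"
    | "i mod d = 1" "a1 = 0" "a2 = 0" "a4 = 0"
    | "i mod d \<notin> {0, 1, d - 1}" "a1 = 0" "a2 = 0" "a3 = 0"
    using a1 a2 a3 a4 by fastforce
  then show ?thesis
    unfolding sum a1_def[symmetric] a2_def[symmetric] a3_def[symmetric] a4_def[symmetric]
    using d by cases auto
qed

lemma abs_coeff_root_approx_poly_le:
  fixes F :: "int poly"
  assumes d: "degree F + 6 \<le> d" and F: "\<And>i. \<bar>coeff F i\<bar> \<le> 1"
  shows "\<bar>coeff (root_approx_poly F d) i\<bar> \<le> 2"
proof -
  have d0: "d > 0" using d by simp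
  have G: "\<bar>coeff (monom 1 c * pcompose F (monom 1 d)) i\<bar> \<le> 1" for c
    using F by (simp add: coeff_monom_mult_pcompose_monom[OF d0])
  have "\<bar>coeff ([:-1, 1:] * F) j\<bar> \<le> 2" for j
    using F[of j] F[of "j - 1"] by (cases j) (simp_all add: abs_le_iff)
  then have "\<bar>coeff (monom 1 2 * [:-1, 1:] * F) i\<bar> \<le> 2"
    unfolding mult.assoc coeff_monom_mult by simp
  then show ?thesis
    using G[of "2 * d - 1"] G[of d] G[of 1] by (simp add: coeff_root_approx_poly[OF d] abs_mult)
qed

lemma degree_root_approx_poly:
  fixes F :: "'a::comm_ring_1 poly"
  assumes d: "degree F + 6 \<le> d" and "F \<noteq> 0"
  shows "degree (root_approx_poly F d) = d * (degree F + 2) - 1"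
proof (rule antisym)
  define n where "n = degree F"
  have d0: "d > 0" using d by simp
  have "degree (monom (1::'a) (d - 1) - 1) \<le> d - 1"
    by (rule degree_diff_le) (simp_all add: degree_monom_le)
  then have "degree (monom 1 1 * pcompose F (monom 1 d) * (monom (1::'a) (d - 1) - 1)\<^sup>2)
      \<le> 1 + n * d + 2 * (d - 1)"
    unfolding n_def
    by (intro order.trans[OF degree_mult_le] add_mono order.trans[OF degree_power_le]
        order.trans[OF degree_pcompose_le]) (auto simp: degree_monom_le)
  moreover have "degree (monom 1 2 * [:-1, 1:] * F) \<le> 2 + 1 + n"
    unfolding n_def
    by (intro order.trans[OF degree_mult_le] add_mono) (auto simp: degree_monom_le)
  ultimately show "degree (root_approx_poly F d) \<le> d * (degree F + 2) - 1"
    unfolding root_approx_poly_def n_def[symmetric] using d0 d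
    by (intro degree_add_le) (auto simp: algebra_simps n_def)
next
  define D where "D = d * (degree F + 2) - 1"
  have d0: "d > 0" using d by simp
  have "D = d * (degree F + 1) + (d - 1)"
    using d0 unfolding D_def by (simp add: algebra_simps)
  then have "D mod d = d - 1"
    using d0 by (simp only: mod_mult_self4) simp
  then have "coeff (root_approx_poly F d) D = coeff (monom 1 (2 * d - 1) * pcompose F (monom 1 d)) D"
    by (simp only: coeff_root_approx_poly[OF d] refl if_True)
  also have "\<dots> = lead_coeff F"
  proof -
    have "2 * d - 1 \<le> D" and "D - (2 * d - 1) = d * degree F"
      using d0 unfolding D_def by (simp_all add: algebra_simps)
    then show ?thesis
      using d0 by (simp add: coeff_monom_mult_pcompose_monom)
  qed
  finally have "coeff (root_approx_poly F d) D = lead_coeff F" .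
  then show "D \<le> degree (root_approx_poly F d)"
    using assms by (intro le_degree) simp
qed

lemma pcompose_root_approx_poly_one_plus_X:
  "pcompose (root_approx_poly F d) [:1, 1:] =
    [:1, 1:] * pcompose F ([:1, 1:] ^ d) * ([:1, 1:] ^ (d - 1) - 1)\<^sup>2
      + [:1, 1:]\<^sup>2 * [:0, 1:] * pcompose F [:1, 1:]"
proof -
  have "pcompose (pcompose F (monom 1 d)) [:1, 1:] = pcompose F ([:1, 1:] ^ d)"
    by (simp add: pcompose_assoc[symmetric] pcompose_monom_one_plus_X)
  moreover have "pcompose [:-1, 1:] [:1, 1:] = ([:0, 1:] :: 'a poly)"
    by (simp add: pcompose_X_minus_one one_pCons)
  ultimately show ?thesis
    unfolding root_approx_poly_def pcompose_add pcompose_mult pcompose_power pcompose_diff pcompose_1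
      pcompose_monom_one_plus_X by simp
qed

lemma taylor_shift_root_approx_poly:
  fixes f :: "'a::comm_ring_1 poly"
  assumes "d > 0"
  shows "\<exists>W. pcompose (root_approx_poly ([:-1, 1:] ^ k * f) d) [:1, 1:] = monom 1 (k + 1) * W
    \<and> coeff W 0 = poly f 1
    \<and> coeff W 1 = poly f 1 * (of_nat d ^ k * (of_nat d - 1)\<^sup>2 + 2) + coeff (pcompose f [:1, 1:]) 1"
proof -
  define X :: "'a poly" where "X = [:0, 1:]"
  define S :: "'a poly" where "S = [:1, 1:]"
  define h where "h n = (\<Sum>i<n. S ^ i)" for n
  define g where "g = pcompose f S"
  define fq where "fq = pcompose f (S ^ d)"
  define W where "W = X * (S * h d ^ k * fq * h (d - 1) ^ 2) + S ^ 2 * g"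
  have "pcompose ([:-1, 1:] ^ k * f) (S ^ d) = (X * h d) ^ k * fq"
    and "pcompose ([:-1, 1:] ^ k * f) S = X ^ k * g"
    and "S ^ (d - 1) - 1 = X * h (d - 1)"
    unfolding X_def S_def h_def g_def fq_def
    by (simp_all add: pcompose_mult pcompose_power pcompose_X_minus_one one_plus_X_power_minus_one)
      (simp add: one_pCons)
  then have "pcompose (root_approx_poly ([:-1, 1:] ^ k * f) d) S
      = S * ((X * h d) ^ k * fq) * (X * h (d - 1))\<^sup>2 + S\<^sup>2 * X * (X ^ k * g)"
    using pcompose_root_approx_poly_one_plus_X unfolding S_def X_def by metis
  also have "\<dots> = monom 1 (k + 1) * W"
    unfolding W_def monom_altdef X_def[symmetric]
    by (simp add: power_mult_distrib power_add power2_eq_square distrib_left mult_ac)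
  finally have "pcompose (root_approx_poly ([:-1, 1:] ^ k * f) d) S = monom 1 (k + 1) * W" .
  moreover have "coeff g 0 = poly f 1" and "coeff fq 0 = poly f 1"
    by (simp_all add: fq_def g_def S_def coeff_one_plus_X_power)
  moreover have "coeff W 0 = poly f 1"
    using \<open>coeff g 0 = poly f 1\<close> by (simp add: W_def X_def S_def coeff_mult_0 coeff_one_plus_X_power)
  moreover have "coeff W 1 = poly f 1 * (of_nat d ^ k * (of_nat d - 1)\<^sup>2 + 2) + coeff g 1"
  proof -
    have "of_nat (d - 1) = (of_nat d - 1 :: 'a)"
      using assms by (simp add: of_nat_diff Suc_leI)
    then have "coeff (S * h d ^ k * fq * h (d - 1) ^ 2) 0 = of_nat d ^ k * poly f 1 * (of_nat d - 1)\<^sup>2"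
      using \<open>coeff fq 0 = poly f 1\<close>
      by (simp add: coeff_mult_0 coeff_0_power h_def coeff_0_sum_one_plus_X_power S_def del: of_nat_diff)
    moreover have "coeff (S ^ 2 * g) 1 = coeff g 1 + 2 * poly f 1"
      using \<open>coeff g 0 = poly f 1\<close> by (simp add: S_def coeff_mult numeral_2_eq_2)
    ultimately show ?thesis
      by (simp add: W_def X_def algebra_simps)
  qed
  ultimately show ?thesis
    unfolding S_def g_def by blast
qed

lemma abs_coeff_1_pcompose_cofactor_le:
  fixes F f :: "int poly"
  assumes F: "F = [:-1, 1:] ^ k * f" and coeffs: "\<And>i. \<bar>coeff F i\<bar> \<le> 1"
  shows "real_of_int \<bar>coeff (pcompose f [:1, 1:]) 1\<bar> \<le> real (degree F + 1) ^ (k + 2)"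
proof -
  have "pcompose F [:1, 1:] = monom 1 k * pcompose f [:1, 1:]"
    by (simp add: F pcompose_mult pcompose_power pcompose_X_minus_one monom_altdef one_pCons)
  then have "real_of_int \<bar>coeff (pcompose f [:1, 1:]) 1\<bar> * fact (k + 1) \<le> real (degree F + 1) ^ (k + 2)"
    using abs_coeff_pcompose_one_plus_X_le[OF coeffs, of "k + 1"] by (simp add: coeff_monom_mult)
  moreover have "real_of_int \<bar>coeff (pcompose f [:1, 1:]) 1\<bar> * 1
      \<le> real_of_int \<bar>coeff (pcompose f [:1, 1:]) 1\<bar> * fact (k + 1)"
    by (intro mult_left_mono fact_ge_1) simp
  ultimately show ?thesis
    by simp
qed

lemma root_approx_poly_root_near_one:
  fixes F f :: "int poly" and k d :: nat
  assumes F: "F = [:-1, 1:] ^ k * f" and coeffs: "\<And>i. \<bar>coeff F i\<bar> \<le> 1"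
    and k: "9 \<le> k" and f1: "poly f 1 \<noteq> 0"
    and n: "9 \<le> degree F" and dn: "(degree F + 2) ^ 3 \<le> d\<^sup>2"
  shows "\<exists>t>0. t < 2 / real d ^ (k + 2) \<and> poly (map_poly of_int (root_approx_poly F d)) (1 - t) = 0"
proof -
  define P where "P = root_approx_poly F d"
  define N where "N = real (d * (degree F + 2))"
  define \<beta> where "\<beta> = coeff (pcompose f [:1, 1:]) 1"
  note real_bounds = real_bounds_of_cube_le_square[OF k n dn]
  have d: "degree F + 6 \<le> d" and d20: "20 \<le> d"
    using nat_bounds_of_cube_le_square(1)[OF k n dn] n by simp_all
  obtain W where TP: "pcompose P [:1, 1:] = monom 1 (k + 1) * W" and W0: "coeff W 0 = poly f 1"
    and W1: "coeff W 1 = poly f 1 * (int d ^ k * (int d - 1)\<^sup>2 + 2) + \<beta>"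
    using taylor_shift_root_approx_poly[of d k f] d unfolding P_def \<beta>_def F by auto
  have "F \<noteq> 0"
    using f1 unfolding F by auto
  then have "degree P + 1 = d * (degree F + 2)"
    using degree_root_approx_poly[OF d] d unfolding P_def by simp
  then have coeffs_W: "real_of_int \<bar>coeff W i\<bar> * fact (k + 1 + i) \<le> 2 * N ^ (k + 2 + i)" for i
    using abs_coeff_pcompose_one_plus_X_le[OF abs_coeff_root_approx_poly_le[OF d coeffs], of "k + 1 + i"]
    unfolding N_def P_def[symmetric] TP by (simp add: coeff_monom_mult add.assoc)
  have "real_of_int \<bar>\<beta>\<bar> * (2 / real d ^ (k + 2))
      \<le> real (degree F + 1) ^ (k + 2) * (2 / real d ^ (k + 2))"
    using abs_coeff_1_pcompose_cofactor_le[OF F coeffs] unfolding \<beta>_def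
    by (intro mult_right_mono) simp_all
  then have "real_of_int \<bar>\<beta>\<bar> * (2 / real d ^ (k + 2)) \<le> 1 / 50"
    using real_bounds(3) by simp
  moreover have "real_of_int (coeff W 1)
      = real_of_int (coeff W 0) * (real d ^ k * (real d - 1)\<^sup>2 + 2) + \<beta>"
    using W0 W1 by simp
  moreover have "0 < 2 / real d ^ (k + 2)"
    using d by simp
  ultimately obtain t where t: "0 < t" "t < 2 / real d ^ (k + 2)"
    and root: "poly (map_poly of_int W) (-t) = (0::real)"
    using int_poly_root_near_zero[OF k _ _ real_bounds(1,2) coeffs_W[unfolded N_def] _ _
        scaled_linear_coeff_ge[of "real d" k]] W0 f1 d20 by auto
  have "poly (map_poly of_int P) (1 - t) = poly (map_poly of_int (pcompose P [:1, 1:])) (-t :: real)"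
    using poly_map_poly_of_int_shift[of P "-t"] by simp
  also have "\<dots> = 0"
    unfolding TP map_poly_of_int_mult using root by simp
  finally show ?thesis
    using t unfolding P_def by blast
qed

theorem lemma4p7:
  fixes F f :: "int poly" and k :: nat
  assumes coeffsF: "\<forall>i. coeff F i \<in> {-1, 0, 1}"
    and factor: "F = [:-1, 1:] ^ k * f"
    and k9: "k \<ge> 9"
    and f1: "poly f 1 \<noteq> 0"
  shows "\<forall>d::nat. d > 0 \<and> real d \<ge> (real (degree F) + 2) powr (3/2) \<longrightarrow>
    (\<exists>P :: int poly. degree P = d * (degree F + 2) - 1
        \<and> (\<forall>i. coeff P i \<in> {-2, -1, 0, 1, 2})
        \<and> (\<exists>\<alpha>::real. \<alpha> < 1 \<and> poly (map_poly of_int P) \<alpha> = 0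
              \<and> \<bar>1 - \<alpha>\<bar> \<le> 2 * real d powr (- (real k + 2))))"
proof (intro allI impI)
  fix d :: nat
  assume "d > 0 \<and> real d \<ge> (real (degree F) + 2) powr (3/2)"
  then have "real (degree F + 2) powr (3 / 2) \<le> real d"
    unfolding of_nat_add of_nat_numeral by blast
  then have dn: "(degree F + 2) ^ 3 \<le> d\<^sup>2"
    by (rule cube_le_square_if_powr_le)
  have coeffs: "\<bar>coeff F i\<bar> \<le> 1" for i
    using coeffsF[rule_format, of i] by auto
  have "f \<noteq> 0"
    using f1 by auto
  then have F0: "F \<noteq> 0" and n: "9 \<le> degree F"
    using k9 unfolding factor by (simp_all add: degree_mult_eq degree_linear_power)
  have d: "degree F + 6 \<le> d"
    using nat_bounds_of_cube_le_square(1)[OF k9 n dn] by simp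
  obtain t where t: "0 < t" "t < 2 / real d ^ (k + 2)"
    and root: "poly (map_poly of_int (root_approx_poly F d)) (1 - t) = (0::real)"
    using root_approx_poly_root_near_one[OF factor coeffs k9 f1 n dn] by blast
  have "real k + 2 = real (k + 2)" and "0 < real d"
    using d by simp_all
  then have "2 * real d powr (- (real k + 2)) = 2 / real d ^ (k + 2)"
    by (simp only: powr_minus_divide powr_realpow)
  moreover have "coeff (root_approx_poly F d) i \<in> {-2, -1, 0, 1, 2}" for i
    using abs_coeff_root_approx_poly_le[OF d coeffs, of i] by auto
  ultimately show "\<exists>P :: int poly. degree P = d * (degree F + 2) - 1
        \<and> (\<forall>i. coeff P i \<in> {-2, -1, 0, 1, 2})
        \<and> (\<exists>\<alpha>::real. \<alpha> < 1 \<and> poly (map_poly of_int P) \<alpha> = 0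
              \<and> \<bar>1 - \<alpha>\<bar> \<le> 2 * real d powr (- (real k + 2)))"
    using degree_root_approx_poly[OF d F0] t root
    by (intro exI[of _ "root_approx_poly F d"] conjI exI[of _ "1 - t"]) auto
qed

end
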